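(* For every leaf node $u$ in a partially built threshold tree $\mathcal{T}_t$, we have $\frac{1}{\sqrt{2}} R_u \leq D_u \leq 2R_u$.
   Context: Let $C_u\subseteq \mathbb{R}^d$ be the finite set of centers assigned to node $u$ of the threshold tree being built by the algorithm. Let $m^u$ be a (coordinate-wise) median of $C_u$, i.e., a point such that for every coordinate $i$, each of the sets $\{c\in C_u: c_i < m^u_i\}$ and $\{c\in C_u: c_i > m^u_i\}$ contains at most half of the points of $C_u$. Let $R_u = \max\{\|c-m^u\|_2 : c\in C_u\}$ be the maximum distance from $m^u$ to a center in $C_u$, and let $D_u = \max\{\|c'-c''\|_2 : c',c''\in C_u\}$ be the diameter of $C_u$. *)

theory Defs
  imports "HOL-Analysis.Analysis"
begin

definition coord_median :: "(real ^ 'n) set \<Rightarrow> real ^ 'n \<Rightarrow> bool" where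
  "coord_median C m \<longleftrightarrow>
     (\<forall>i. 2 * card {c \<in> C. c $ i < m $ i} \<le> card C \<and>
          2 * card {c \<in> C. c $ i > m $ i} \<le> card C)"

definition max_radius :: "(real ^ 'n) set \<Rightarrow> real ^ 'n \<Rightarrow> real" where
  "max_radius C m = Max ((\<lambda>c. norm (c - m)) ` C)"

definition diam_set :: "(real ^ 'n) set \<Rightarrow> real" where
  "diam_set C = Max {norm (c' - c'') | c' c''. c' \<in> C \<and> c'' \<in> C}"

end

theory Submission
  imports Defs
begin

text \<open>The upper bound is the triangle inequality through the median m. For the lower bound, take
  a center c farthest from m. In every coordinate i, at least half of the centers c' lie on the
  far side of m_i as seen from c_i, so that |c_i - c'_i| \<ge> |c_i - m_i|. Summing over coordinates
  and centers gives |C| R^2 \<le> 2 \<Sum>c'. |c - c'|^2 \<le> 2 |C| D^2.\<close>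

lemma power2_norm_vec_eq_sum: "(norm (x :: real ^ 'n))\<^sup>2 = (\<Sum>i\<in>UNIV. (x $ i)\<^sup>2)"
  unfolding power2_norm_eq_inner inner_vec_def by (simp add: power2_eq_square)

lemma card_mult_power2_le_sum_power2_if_few_above:
  fixes f :: "'a \<Rightarrow> real"
  assumes fin: "finite C" and few_above: "2 * card {c \<in> C. f c > \<mu>} \<le> card C" and "\<mu> \<le> x"
  shows "real (card C) * (x - \<mu>)\<^sup>2 \<le> 2 * (\<Sum>c\<in>C. (x - f c)\<^sup>2)"
proof -
  let ?below = "{c \<in> C. f c \<le> \<mu>}" and ?above = "{c \<in> C. f c > \<mu>}"
  have "card ?below + card ?above = card C"
    using fin by (subst card_Un_disjoint [symmetric]) (auto intro: arg_cong [where f = card])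
  then have card_le: "real (card C) \<le> 2 * real (card ?below)"
    using few_above by linarith
  have "real (card C) * (x - \<mu>)\<^sup>2 \<le> 2 * real (card ?below) * (x - \<mu>)\<^sup>2"
    using card_le by (rule mult_right_mono) simp
  also have "\<dots> = 2 * (\<Sum>c\<in>?below. (x - \<mu>)\<^sup>2)"
    by simp
  also have "\<dots> \<le> 2 * (\<Sum>c\<in>?below. (x - f c)\<^sup>2)"
    using \<open>\<mu> \<le> x\<close> by (intro mult_left_mono sum_mono power_mono) auto
  also have "\<dots> \<le> 2 * (\<Sum>c\<in>C. (x - f c)\<^sup>2)"
    using fin by (intro mult_left_mono sum_mono2) auto
  finally show ?thesis .
qed

lemma card_mult_power2_le_sum_power2_if_median:
  fixes f :: "'a \<Rightarrow> real"
  assumes "finite C"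
    and "2 * card {c \<in> C. f c < \<mu>} \<le> card C" and "2 * card {c \<in> C. f c > \<mu>} \<le> card C"
  shows "real (card C) * (x - \<mu>)\<^sup>2 \<le> 2 * (\<Sum>c\<in>C. (x - f c)\<^sup>2)"
proof (cases "\<mu> \<le> x")
  case True
  then show ?thesis
    using assms card_mult_power2_le_sum_power2_if_few_above by blast
next
  case False
  have "2 * card {c \<in> C. - f c > - \<mu>} \<le> card C"
    using assms(2) by simp
  then have "real (card C) * (- x - - \<mu>)\<^sup>2 \<le> 2 * (\<Sum>c\<in>C. (- x - - f c)\<^sup>2)"
    using False \<open>finite C\<close> by (intro card_mult_power2_le_sum_power2_if_few_above) auto
  then show ?thesis
    by (simp add: power2_commute)
qed

lemma card_mult_power2_norm_le_sum_if_coord_median: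
  fixes C :: "(real ^ 'n) set"
  assumes "finite C" and "coord_median C m"
  shows "real (card C) * (norm (x - m))\<^sup>2 \<le> 2 * (\<Sum>c\<in>C. (norm (x - c))\<^sup>2)"
proof -
  have "real (card C) * (norm (x - m))\<^sup>2 = (\<Sum>i\<in>UNIV. real (card C) * (x $ i - m $ i)\<^sup>2)"
    by (simp add: power2_norm_vec_eq_sum sum_distrib_left)
  also have "\<dots> \<le> (\<Sum>i\<in>UNIV. 2 * (\<Sum>c\<in>C. (x $ i - c $ i)\<^sup>2))"
    using assms unfolding coord_median_def
    by (intro sum_mono card_mult_power2_le_sum_power2_if_median) auto
  also have "\<dots> = 2 * (\<Sum>c\<in>C. \<Sum>i\<in>UNIV. (x $ i - c $ i)\<^sup>2)"
    by (simp add: sum_distrib_left sum.swap [where A = UNIV])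
  also have "\<dots> = 2 * (\<Sum>c\<in>C. (norm (x - c))\<^sup>2)"
    by (simp add: power2_norm_vec_eq_sum)
  finally show ?thesis .
qed

lemma norm_diff_le_max_radius:
  assumes "finite C" and "c \<in> C"
  shows "norm (c - m) \<le> max_radius C m"
  unfolding max_radius_def using assms by simp

lemma max_radius_attained:
  assumes "finite C" and "C \<noteq> {}"
  obtains c where "c \<in> C" and "max_radius C m = norm (c - m)"
proof -
  have "max_radius C m \<in> (\<lambda>c. norm (c - m)) ` C"
    unfolding max_radius_def using assms by (intro Max_in) auto
  then show ?thesis using that by blast
qed

lemma pairwise_norm_diffs_eq_image:
  "{norm (c' - c'') | c' c''. c' \<in> C \<and> c'' \<in> C} = (\<lambda>(a, b). norm (a - b)) ` (C \<times> C)"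
  by auto

lemma norm_diff_le_diam_set:
  assumes "finite C" and "a \<in> C" and "b \<in> C"
  shows "norm (a - b) \<le> diam_set C"
  unfolding diam_set_def pairwise_norm_diffs_eq_image using assms
  by (intro Max_ge) auto

lemma diam_set_le:
  assumes "finite C" and "C \<noteq> {}" and "\<And>a b. a \<in> C \<Longrightarrow> b \<in> C \<Longrightarrow> norm (a - b) \<le> B"
  shows "diam_set C \<le> B"
  unfolding diam_set_def pairwise_norm_diffs_eq_image using assms by auto

lemma diam_set_le_2_max_radius:
  assumes "finite C" and "C \<noteq> {}"
  shows "diam_set C \<le> 2 * max_radius C m"
proof (rule diam_set_le [OF assms])
  fix a b assume "a \<in> C" "b \<in> C"
  have "norm (a - b) \<le> norm (a - m) + norm (b - m)"
    using norm_triangle_ineq4 [of "a - m" "b - m"] by simp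
  then show "norm (a - b) \<le> 2 * max_radius C m"
    using norm_diff_le_max_radius [OF \<open>finite C\<close> \<open>a \<in> C\<close>, of m]
      norm_diff_le_max_radius [OF \<open>finite C\<close> \<open>b \<in> C\<close>, of m]
    by linarith
qed

lemma max_radius_le_sqrt2_diam_set:
  fixes C :: "(real ^ 'n) set"
  assumes fin: "finite C" and "C \<noteq> {}" and "coord_median C m"
  shows "max_radius C m \<le> sqrt 2 * diam_set C"
proof -
  let ?R = "max_radius C m" and ?D = "diam_set C"
  obtain c where "c \<in> C" and R_eq: "?R = norm (c - m)"
    using max_radius_attained [OF assms(1,2)] by blast
  have "real (card C) * ?R\<^sup>2 \<le> 2 * (\<Sum>c'\<in>C. (norm (c - c'))\<^sup>2)"
    unfolding R_eq using fin \<open>coord_median C m\<close>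
    by (rule card_mult_power2_norm_le_sum_if_coord_median)
  also have "\<dots> \<le> 2 * (\<Sum>c'\<in>C. ?D\<^sup>2)"
    using fin \<open>c \<in> C\<close> by (intro mult_left_mono sum_mono power_mono norm_diff_le_diam_set) auto
  also have "\<dots> = real (card C) * (sqrt 2 * ?D)\<^sup>2"
    by (simp add: power_mult_distrib)
  finally have "?R\<^sup>2 \<le> (sqrt 2 * ?D)\<^sup>2"
    using fin \<open>C \<noteq> {}\<close> by (simp add: card_gt_0_iff)
  moreover have "0 \<le> sqrt 2 * ?D"
    using norm_diff_le_diam_set [OF fin \<open>c \<in> C\<close> \<open>c \<in> C\<close>] by simp
  ultimately show ?thesis
    by (rule power2_le_imp_le)
qed

theorem lemma2:
  fixes C :: "(real ^ 'n) set" and m :: "real ^ 'n"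
  assumes "finite C" and "C \<noteq> {}"
    and "coord_median C m"
  shows "max_radius C m / sqrt 2 \<le> diam_set C \<and> diam_set C \<le> 2 * max_radius C m"
  using max_radius_le_sqrt2_diam_set [OF assms] diam_set_le_2_max_radius [OF assms(1,2)]
  by (simp add: divide_le_eq mult.commute)

end
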